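(* Let $(\alpha_n,\beta_n)_{n\ge1}$ be integers with $8\sum_{k<n}\beta_k<\alpha_n\le\beta_n$ for every $n$ and $\sum_i \frac{\log\beta_i}{2^i}<\infty$. Then for all sufficiently small $\varepsilon>0$, a $B_\varepsilon$-random subset of $\mathbb{Z}^2$ is sparse (with respect to $(\alpha_n,\beta_n)$) with probability $1$.
   Context: Distances on $\mathbb{Z}^2$ are $\ell_\infty$; the diameter of a set is the maximal distance between its elements; the $\beta$-neighborhood of $X$ is the set of points at distance at most $\beta$ from some point of $X$. For $E\subset\mathbb{Z}^2$ and integers $\beta\ge\alpha>0$, a nonempty $X\subset E$ is an $(\alpha,\beta)$-island in $E$ if its diameter is at most $\alpha$ and the $\beta$-neighborhood of $X$ contains no point of $E\setminus X$. Given $(\alpha_i,\beta_i)$ with $\alpha_i\le\beta_i$, the cleaning process sets $E_0=E$ and obtains $E_i$ from $E_{i-1}$ by removing all $(\alpha_i,\beta_i)$-islands of $E_{i-1}$ (the rank $i$ islands); a point is affected at step $i$ if it lies in the $\beta_i$-neighborhood of some rank $i$ island. $E$ is sparse if every point of $E$ is removed at some step and every point of $\mathbb{Z}^2$ is affected at only finitely many steps. $B_\varepsilon$ is the Bernoulli distribution on subsets of $\mathbb{Z}^2$: each point belongs to the set independently with probability $\varepsilon$. *)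

theory Defs
  imports "HOL-Probability.Probability"
begin

type_synonym pt = "int \<times> int"

definition linf :: "pt \<Rightarrow> pt \<Rightarrow> int" where
  "linf p q = max \<bar>fst p - fst q\<bar> \<bar>snd p - snd q\<bar>"

definition island :: "int \<Rightarrow> int \<Rightarrow> pt set \<Rightarrow> pt set \<Rightarrow> bool" where
  "island a b E X \<longleftrightarrow> X \<noteq> {} \<and> X \<subseteq> E \<and>
     (\<forall>x\<in>X. \<forall>y\<in>X. linf x y \<le> a) \<and>
     (\<forall>y\<in>E - X. \<forall>x\<in>X. \<not> linf y x \<le> b)"

fun clean :: "(nat \<Rightarrow> int) \<Rightarrow> (nat \<Rightarrow> int) \<Rightarrow> pt set \<Rightarrow> nat \<Rightarrow> pt set" where
  "clean \<alpha> \<beta> E 0 = E"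
| "clean \<alpha> \<beta> E (Suc i) =
     clean \<alpha> \<beta> E i - \<Union>{X. island (\<alpha> (Suc i)) (\<beta> (Suc i)) (clean \<alpha> \<beta> E i) X}"

definition affected :: "(nat \<Rightarrow> int) \<Rightarrow> (nat \<Rightarrow> int) \<Rightarrow> pt set \<Rightarrow> nat \<Rightarrow> pt \<Rightarrow> bool" where
  "affected \<alpha> \<beta> E i p \<longleftrightarrow> 1 \<le> i \<and>
     (\<exists>X. island (\<alpha> i) (\<beta> i) (clean \<alpha> \<beta> E (i - 1)) X \<and> (\<exists>x\<in>X. linf p x \<le> \<beta> i))"

definition sparse :: "(nat \<Rightarrow> int) \<Rightarrow> (nat \<Rightarrow> int) \<Rightarrow> pt set \<Rightarrow> bool" where
  "sparse \<alpha> \<beta> E \<longleftrightarrow> (\<forall>p\<in>E. \<exists>i. p \<notin> clean \<alpha> \<beta> E i) \<and>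
     (\<forall>p. finite {i. affected \<alpha> \<beta> E i p})"

text \<open>Bernoulli distribution B_eps on subsets of Z^2, as a product measure on indicator functions.\<close>
definition bernoulli_field :: "real \<Rightarrow> (pt \<Rightarrow> bool) measure" where
  "bernoulli_field \<epsilon> = PiM UNIV (\<lambda>_. measure_pmf (bernoulli_pmf \<epsilon>))"

end

theory Submission
  imports Defs
begin

(* A point x that survives k cleaning steps carries a "witness": a set of
   2^k points of E, built recursively.  Since x is not inside a rank k+1 island, the cleaned set
   contains a point y with alpha_{k+1}/2 < |x - y| <= alpha_{k+1}/2 + beta_{k+1}; the witnesses
   of depth k of x and of y are disjoint (they stay within 2(beta_1 + ... + beta_k) of their
   roots, which is small by the growth condition), and their union is a witness of depth k+1.
   The number of possible witnesses of depth k rooted at a given point is at most C^(2^k) by the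
   summability hypothesis, while a fixed one lies in a B_eps-random set with probability
   eps^(2^k).  So for eps < 1/(2 C^2) the event "some point near p has a witness of depth j"
   has probability at most 2^-j, and by Borel-Cantelli almost surely only finitely many of
   these events occur for every p; deterministically this forces sparseness. *)

section \<open>Events of the Bernoulli field\<close>

definition occupied :: "pt set \<Rightarrow> (pt \<Rightarrow> bool) set" where
  "occupied S = {\<omega>. \<forall>q\<in>S. \<omega> q}"

lemma occupied_prod_emb:
  "occupied S = prod_emb UNIV (\<lambda>_. measure_pmf (bernoulli_pmf e)) S (\<Pi>\<^sub>E q\<in>S. {True})"
proof -
  have "\<And>\<omega>. (restrict \<omega> S \<in> (\<Pi>\<^sub>E q\<in>S. {True})) = (\<forall>q\<in>S. \<omega> q)"
    unfolding restrict_PiE_iff Pi_iff by auto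
  then show ?thesis unfolding occupied_def prod_emb_def space_PiM by auto
qed

lemma prob_space_bernoulli_field: "prob_space (bernoulli_field e)"
  unfolding bernoulli_field_def by (rule prob_space_PiM) (simp add: prob_space_measure_pmf)

lemma occupied_sets: "finite S \<Longrightarrow> occupied S \<in> sets (bernoulli_field e)"
  unfolding bernoulli_field_def occupied_prod_emb[of S e] by (rule sets_PiM_I) auto

lemma measure_occupied:
  assumes "finite S" "0 \<le> e" "e \<le> 1"
  shows "measure (bernoulli_field e) (occupied S) = e ^ card S"
proof -
  have "emeasure (bernoulli_field e) (occupied S)
          = (\<Prod>i\<in>S. emeasure (measure_pmf (bernoulli_pmf e)) {True})"
    unfolding bernoulli_field_def occupied_prod_emb[of S e]
    by (rule emeasure_PiM_emb) (auto simp: prob_space_measure_pmf assms)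
  also have "\<dots> = ennreal (e ^ card S)"
    using assms by (simp add: emeasure_pmf_single ennreal_power)
  finally show ?thesis using assms by (simp add: measure_def)
qed

lemma measure_union_occupied:
  assumes fin: "finite \<S>" and size: "\<And>S. S \<in> \<S> \<Longrightarrow> finite S \<and> card S = m"
    and e: "0 \<le> e" "e \<le> 1"
  shows "measure (bernoulli_field e) (\<Union>S\<in>\<S>. occupied S) \<le> real (card \<S>) * e ^ m"
proof -
  have "measure (bernoulli_field e) (\<Union>S\<in>\<S>. occupied S)
          \<le> (\<Sum>S\<in>\<S>. measure (bernoulli_field e) (occupied S))"
    using fin size by (intro measure_UNION_le) (auto intro: occupied_sets)
  also have "\<dots> = (\<Sum>S\<in>\<S>. e ^ m)"
    using size e by (intro sum.cong) (auto simp: measure_occupied)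
  finally show ?thesis by simp
qed

lemma (in prob_space) AE_eventually_not_in:
  fixes A :: "nat \<Rightarrow> 'i::countable \<Rightarrow> 'a set"
  assumes "\<And>j i. A j i \<in> events" and "\<And>i. summable (\<lambda>j. prob (A j i))"
  shows "AE \<omega> in M. \<forall>i. eventually (\<lambda>j. \<omega> \<notin> A j i) sequentially"
proof -
  have "AE \<omega> in M. eventually (\<lambda>j. \<omega> \<in> space M - A j i) sequentially" for i
    using assms by (intro borel_cantelli_AE1) (auto simp: less_top[symmetric])
  then have "AE \<omega> in M. eventually (\<lambda>j. \<omega> \<notin> A j i) sequentially" for i
    by (rule AE_mp) (auto elim: eventually_mono)
  then show ?thesis by (simp add: AE_all_countable)
qed

lemma linf_self [simp]: "linf x x = 0"
  by (simp add: linf_def)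

lemma linf_sym: "linf x y = linf y x"
  by (simp add: linf_def abs_minus_commute)

lemma linf_nonneg: "0 \<le> linf x y"
  by (simp add: linf_def)

lemma linf_triangle: "linf x z \<le> linf x y + linf y z"
  unfolding linf_def by (simp add: max_def abs_if split: if_splits) linarith?

definition sqbox :: "pt \<Rightarrow> int \<Rightarrow> pt set" where
  "sqbox x r = {z. linf x z \<le> r}"

lemma sqbox_eq: "sqbox x r = {fst x - r..fst x + r} \<times> {snd x - r..snd x + r}"
  unfolding sqbox_def linf_def by (auto simp: abs_le_iff)

lemma finite_sqbox: "finite (sqbox x r)"
  by (simp add: sqbox_eq)

lemma card_sqbox: "card (sqbox x r) = nat (2 * r + 1) ^ 2"
  by (simp add: sqbox_eq card_cartesian_product power2_eq_square)

section \<open>Witness sets\<close>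

fun witness_sets :: "(nat \<Rightarrow> int) \<Rightarrow> nat \<Rightarrow> pt \<Rightarrow> pt set set" where
  "witness_sets r 0 x = {{x}}"
| "witness_sets r (Suc k) x =
     {A \<union> B | A y B. A \<in> witness_sets r k x \<and> y \<in> sqbox x (r (Suc k)) \<and>
                    B \<in> witness_sets r k y \<and> A \<inter> B = {}}"

lemma witness_set_card: "S \<in> witness_sets r k x \<Longrightarrow> finite S \<and> card S = 2 ^ k"
proof (induction k arbitrary: x S)
  case (Suc k)
  then obtain A y B where "S = A \<union> B" "A \<in> witness_sets r k x" "B \<in> witness_sets r k y"
    "A \<inter> B = {}" by auto
  with Suc.IH[of A x] Suc.IH[of B y] show ?case by (simp add: card_Un_disjoint)
qed simp

lemma witness_set_local:
  "S \<in> witness_sets r k x \<Longrightarrow> q \<in> S \<Longrightarrow> linf x q \<le> (\<Sum>i\<in>{1..k}. r i)"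
proof (induction k arbitrary: x S q)
  case (Suc k)
  then obtain A y B where S: "S = A \<union> B" "A \<in> witness_sets r k x" "B \<in> witness_sets r k y"
    and y: "linf x y \<le> r (Suc k)" by (auto simp: sqbox_def)
  have "0 \<le> r (Suc k)" using y linf_nonneg[of x y] by linarith
  show ?case
  proof (cases "q \<in> A")
    case True
    then show ?thesis using Suc.IH[OF S(2) True] \<open>0 \<le> r (Suc k)\<close> by simp
  next
    case False
    then have "q \<in> B" using S Suc.prems by auto
    from Suc.IH[OF S(3) this] show ?thesis using linf_triangle[of x q y] y by simp
  qed
qed simp

definition box_size :: "(nat \<Rightarrow> int) \<Rightarrow> nat \<Rightarrow> nat" where
  "box_size r n = nat (2 * r n + 1) ^ 2"

fun witness_count :: "(nat \<Rightarrow> int) \<Rightarrow> nat \<Rightarrow> nat" where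
  "witness_count r 0 = 1"
| "witness_count r (Suc k) = witness_count r k ^ 2 * box_size r (Suc k)"

text \<open>Witnesses of depth k+1 are images of triples (A, y, B) under (A, y, B) |-> A Un B, so the
  counts satisfy N_{k+1} <= N_k * |box| * N_k.\<close>
lemma card_witness_sets:
  "finite (witness_sets r k x) \<and> card (witness_sets r k x) \<le> witness_count r k"
proof (induction k arbitrary: x)
  case (Suc k)
  define T where "T = (SIGMA A:witness_sets r k x. SIGMA y:sqbox x (r (Suc k)). witness_sets r k y)"
  have sub: "witness_sets r (Suc k) x \<subseteq> (\<lambda>(A, y, B). A \<union> B) ` T"
    by (auto simp: T_def image_iff)
  have fin: "finite T" unfolding T_def using Suc.IH finite_sqbox by (intro finite_SigmaI) auto
  have "card T = (\<Sum>A\<in>witness_sets r k x. \<Sum>y\<in>sqbox x (r (Suc k)). card (witness_sets r k y))"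
    unfolding T_def using Suc.IH finite_sqbox by simp
  also have "\<dots> \<le> (\<Sum>A\<in>witness_sets r k x. \<Sum>y\<in>sqbox x (r (Suc k)). witness_count r k)"
    using Suc.IH by (intro sum_mono) auto
  also have "\<dots> \<le> witness_count r k * (box_size r (Suc k) * witness_count r k)"
    using Suc.IH by (simp add: card_sqbox box_size_def)
  also have "\<dots> = witness_count r (Suc k)" by (simp add: power2_eq_square)
  finally have "card T \<le> witness_count r (Suc k)" .
  moreover have "card (witness_sets r (Suc k) x) \<le> card T"
    using sub fin by (meson card_image_le card_mono finite_imageI le_trans)
  ultimately show ?case using sub fin finite_subset by fastforce
qed simp

lemma witness_count_le_exp:
  assumes "\<And>n. 1 \<le> n \<Longrightarrow> 0 \<le> r n"
  shows "real (witness_count r k)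
           \<le> exp (2 ^ k * (\<Sum>i<k. ln (real (box_size r (Suc i))) / 2 ^ Suc i))"
proof (induction k)
  case (Suc k)
  have M: "1 \<le> real (box_size r (Suc k))" using assms[of "Suc k"] by (simp add: box_size_def)
  have "real (witness_count r (Suc k)) = real (witness_count r k) ^ 2 * box_size r (Suc k)"
    by simp
  also have "\<dots> \<le> exp (2 ^ k * (\<Sum>i<k. ln (real (box_size r (Suc i))) / 2 ^ Suc i)) ^ 2
                    * box_size r (Suc k)"
    using Suc.IH by (intro mult_right_mono power_mono) auto
  also have "\<dots> = exp (2 ^ Suc k * (\<Sum>i<k. ln (real (box_size r (Suc i))) / 2 ^ Suc i)
                        + ln (box_size r (Suc k)))"
    using M by (simp add: exp_add power2_eq_square exp_add[symmetric])
  also have "\<dots> = exp (2 ^ Suc k * (\<Sum>i<Suc k. ln (real (box_size r (Suc i))) / 2 ^ Suc i))"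
    by (simp add: distrib_left)
  finally show ?case .
qed simp

lemma witness_count_double_exp:
  assumes "\<And>n. 1 \<le> n \<Longrightarrow> 0 \<le> r n"
    and summ: "summable (\<lambda>i. ln (real (box_size r (Suc i))) / 2 ^ Suc i)"
  shows "\<exists>C\<ge>1. \<forall>k. real (witness_count r k) \<le> C ^ (2 ^ k)"
proof -
  define a where "a i = ln (real (box_size r (Suc i))) / 2 ^ Suc i" for i
  have a0: "0 \<le> a i" for i using assms(1)[of "Suc i"] by (simp add: a_def box_size_def)
  have sa: "summable a" using summ unfolding a_def .
  define L where "L = suminf a"
  have "real (witness_count r k) \<le> exp L ^ (2 ^ k)" for k
  proof -
    have "(\<Sum>i<k. a i) \<le> L" unfolding L_def using sa a0 by (intro sum_le_suminf) auto
    then have "exp (2 ^ k * (\<Sum>i<k. a i)) \<le> exp (real (2 ^ k) * L)" by simp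
    also have "\<dots> = exp L ^ (2 ^ k)" by (rule exp_of_nat_mult)
    finally show ?thesis using witness_count_le_exp[of r k] assms(1) by (simp add: a_def)
  qed
  moreover have "1 \<le> exp L" unfolding L_def using sa a0 by (simp add: suminf_nonneg)
  ultimately show ?thesis by blast
qed

section \<open>Consequences of the growth condition\<close>

locale growth_sequences =
  fixes \<alpha> \<beta> :: "nat \<Rightarrow> int"
  assumes growth: "\<And>n. n \<ge> 1 \<Longrightarrow> 8 * (\<Sum>k\<in>{1..<n}. \<beta> k) < \<alpha> n \<and> \<alpha> n \<le> \<beta> n"
begin

text \<open>All alpha_n are positive, by induction on n (the sum of earlier betas is nonnegative).\<close>
lemma alpha_pos: "n \<ge> 1 \<Longrightarrow> 1 \<le> \<alpha> n"
proof (induction n rule: less_induct)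
  case (less n)
  have "0 \<le> \<beta> k" if "k \<in> {1..<n}" for k
    using less.IH[of k] growth[of k] that by fastforce
  then have "0 \<le> (\<Sum>k\<in>{1..<n}. \<beta> k)" by (intro sum_nonneg) blast
  with growth[OF less.prems] show ?case by linarith
qed

text \<open>The radius used for witnesses: half an island diameter plus an island neighbourhood.\<close>
definition link_radius :: "nat \<Rightarrow> int" where
  "link_radius n = \<alpha> n div 2 + \<beta> n"

lemma link_radius_bounds:
  assumes "n \<ge> 1"
  shows "0 \<le> \<alpha> n div 2" "\<beta> n \<le> link_radius n" "link_radius n \<le> 2 * \<beta> n"
    "2 * link_radius n + 1 \<le> 4 * \<beta> n" "0 \<le> link_radius n"
  using alpha_pos[OF assms] growth[OF assms] unfolding link_radius_def by presburger+

lemma summable_ln_box_size: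
  assumes summ: "summable (\<lambda>i. ln (real_of_int (\<beta> (Suc i))) / 2 ^ (Suc i))"
  shows "summable (\<lambda>i. ln (real (box_size link_radius (Suc i))) / 2 ^ Suc i)"
proof (rule summable_comparison_test'[where N = 0])
  have "summable (\<lambda>i. (ln 16 / 2) * (1 / 2 :: real) ^ i)"
    by (intro summable_mult summable_geometric) simp
  then have "summable (\<lambda>i. ln 16 / 2 ^ Suc i :: real)"
    by (simp add: field_simps)
  then show "summable (\<lambda>i. ln 16 / 2 ^ Suc i + 2 * (ln (real_of_int (\<beta> (Suc i))) / 2 ^ Suc i))"
    by (intro summable_add summable_mult summ)
next
  fix i :: nat
  let ?t = "2 * link_radius (Suc i) + 1"
  have t: "1 \<le> ?t" "?t \<le> 4 * \<beta> (Suc i)"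
    using link_radius_bounds[of "Suc i"] alpha_pos[of "Suc i"] growth[of "Suc i"] by auto
  have "ln (real (box_size link_radius (Suc i))) = 2 * ln (real_of_int ?t)"
    using t by (simp add: box_size_def ln_realpow)
  also have "\<dots> \<le> 2 * ln (4 * real_of_int (\<beta> (Suc i)))"
    using t by (subst mult_le_cancel_left_pos) (auto simp del: of_int_mult)
  also have "\<dots> = ln 16 + 2 * ln (real_of_int (\<beta> (Suc i)))"
    using t ln_realpow[of 4 2] by (simp add: ln_mult)
  finally have "ln (real (box_size link_radius (Suc i))) \<le> ln 16 + 2 * ln (real_of_int (\<beta> (Suc i)))" .
  then have "ln (real (box_size link_radius (Suc i))) / 2 ^ Suc i
      \<le> (ln 16 + 2 * ln (real_of_int (\<beta> (Suc i)))) / 2 ^ Suc i"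
    by (rule divide_right_mono) simp
  moreover have "0 \<le> ln (real (box_size link_radius (Suc i)))"
    using t by (simp add: box_size_def)
  ultimately show "norm (ln (real (box_size link_radius (Suc i))) / 2 ^ Suc i)
      \<le> ln 16 / 2 ^ Suc i + 2 * (ln (real_of_int (\<beta> (Suc i))) / 2 ^ Suc i)"
    by (simp only: real_norm_def abs_of_nonneg zero_le_divide_iff zero_le_power
        add_divide_distrib times_divide_eq_right) simp
qed

end

section \<open>Survivors carry witnesses\<close>

text \<open>A point of F that lies in no (a,b)-island of F has a point of F at distance in (h, h+b]
  whenever 0 <= h and 2h <= a: otherwise the h-ball around it would itself be an island.\<close>
lemma escape_from_island:
  assumes x: "x \<in> F" and not_island: "\<And>X. island a b F X \<Longrightarrow> x \<notin> X"
    and h: "0 \<le> h" "2 * h \<le> a"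
  shows "\<exists>y\<in>F. h < linf x y \<and> linf x y \<le> h + b"
proof -
  define X where "X = {z \<in> F. linf x z \<le> h}"
  have "x \<in> X" using x h by (simp add: X_def)
  have diam: "\<forall>u\<in>X. \<forall>v\<in>X. linf u v \<le> a"
    using linf_triangle linf_sym h unfolding X_def by (smt (verit) mem_Collect_eq)
  have "\<not> island a b F X" using not_island \<open>x \<in> X\<close> by blast
  moreover have "X \<noteq> {}" using \<open>x \<in> X\<close> by blast
  moreover have "X \<subseteq> F" unfolding X_def by blast
  ultimately obtain y z where y: "y \<in> F" "y \<notin> X" and z: "z \<in> X" "linf y z \<le> b"
    using diam unfolding island_def by blast
  have "linf x y \<le> h + b"
    using z linf_triangle[of x y z] linf_sym[of y z] by (auto simp: X_def)
  moreover have "h < linf x y" using y by (simp add: X_def)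
  ultimately show ?thesis using y(1) by blast
qed

context growth_sequences
begin

lemma survivor_witness:
  "x \<in> clean \<alpha> \<beta> E k \<Longrightarrow> \<exists>S\<in>witness_sets link_radius k x. S \<subseteq> E"
proof (induction k arbitrary: x)
  case (Suc k)
  define h where "h = \<alpha> (Suc k) div 2"
  define \<sigma> where "\<sigma> = (\<Sum>i\<in>{1..k}. link_radius i)"
  have x: "x \<in> clean \<alpha> \<beta> E k"
    and not_island: "\<And>X. island (\<alpha> (Suc k)) (\<beta> (Suc k)) (clean \<alpha> \<beta> E k) X \<Longrightarrow> x \<notin> X"
    using Suc.prems by auto
  have h: "0 \<le> h" "2 * h \<le> \<alpha> (Suc k)"
    using link_radius_bounds(1)[of "Suc k"] unfolding h_def by auto
  obtain y where y: "y \<in> clean \<alpha> \<beta> E k" "h < linf x y" "linf x y \<le> link_radius (Suc k)"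
    using escape_from_island[of x _ "\<alpha> (Suc k)" "\<beta> (Suc k)" h, OF x not_island h]
    unfolding h_def link_radius_def by blast
  have "\<sigma> \<le> 2 * (\<Sum>i\<in>{1..<Suc k}. \<beta> i)"
    unfolding \<sigma>_def atLeastLessThanSuc_atLeastAtMost sum_distrib_left
    using link_radius_bounds by (intro sum_mono) auto
  then have far: "2 * \<sigma> < linf x y"
    using growth[of "Suc k"] y(2) unfolding h_def by linarith
  obtain A where A: "A \<in> witness_sets link_radius k x" "A \<subseteq> E" using Suc.IH[OF x] by blast
  obtain B where B: "B \<in> witness_sets link_radius k y" "B \<subseteq> E" using Suc.IH[OF y(1)] by blast
  have "A \<inter> B = {}"
  proof (rule ccontr)
    assume "A \<inter> B \<noteq> {}"
    then obtain q where "q \<in> A" "q \<in> B" by auto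
    then have "linf x q \<le> \<sigma>" "linf y q \<le> \<sigma>"
      using witness_set_local A(1) B(1) unfolding \<sigma>_def by blast+
    then show False using linf_triangle[of x y q] linf_sym[of y q] far by linarith
  qed
  then have "A \<union> B \<in> witness_sets link_radius (Suc k) x"
    using A(1) B(1) y(3) unfolding witness_sets.simps sqbox_def mem_Collect_eq by blast
  then show ?case using A B by blast
qed simp

section \<open>Bad events\<close>

definition bad_family :: "nat \<Rightarrow> pt \<Rightarrow> pt set set" where
  "bad_family j p = (\<Union>z\<in>sqbox p (\<beta> (Suc j)). witness_sets link_radius j z)"

definition bad_event :: "nat \<Rightarrow> pt \<Rightarrow> (pt \<Rightarrow> bool) set" where
  "bad_event j p = (\<Union>S\<in>bad_family j p. occupied S)"

lemma finite_bad_family: "finite (bad_family j p)"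
  unfolding bad_family_def using finite_sqbox card_witness_sets by blast

lemma bad_family_sizes: "S \<in> bad_family j p \<Longrightarrow> finite S \<and> card S = 2 ^ j"
  unfolding bad_family_def using witness_set_card by blast

lemma bad_event_sets: "bad_event j p \<in> sets (bernoulli_field e)"
  unfolding bad_event_def using finite_bad_family bad_family_sizes
  by (intro sets.finite_UN occupied_sets) blast+

lemma survivor_bad_event:
  assumes x: "x \<in> clean \<alpha> \<beta> {p. \<omega> p} j" and near: "linf p x \<le> \<beta> (Suc j)"
  shows "\<omega> \<in> bad_event j p"
proof -
  obtain S where S: "S \<in> witness_sets link_radius j x" "S \<subseteq> {p. \<omega> p}"
    using survivor_witness[OF x] by blast
  have "S \<in> bad_family j p" using S(1) near unfolding bad_family_def sqbox_def by blast
  moreover have "\<omega> \<in> occupied S" using S(2) unfolding occupied_def by blast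
  ultimately show ?thesis unfolding bad_event_def by blast
qed

lemma sparse_if_finitely_many_bad:
  assumes "\<And>p. eventually (\<lambda>j. \<omega> \<notin> bad_event j p) sequentially"
  shows "sparse \<alpha> \<beta> {p. \<omega> p}"
proof -
  have eventually_gone: "\<exists>N. \<forall>j\<ge>N. \<omega> \<notin> bad_event j p" for p
    using assms[of p] by (simp add: eventually_sequentially)
  have "\<exists>i. p \<notin> clean \<alpha> \<beta> {p. \<omega> p} i" for p
  proof -
    obtain N where N: "\<omega> \<notin> bad_event N p" using eventually_gone by blast
    have "linf p p \<le> \<beta> (Suc N)" using alpha_pos[of "Suc N"] growth[of "Suc N"] by simp
    then have "p \<notin> clean \<alpha> \<beta> {p. \<omega> p} N" using survivor_bad_event N by blast
    then show ?thesis by blast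
  qed
  moreover have "finite {i. affected \<alpha> \<beta> {p. \<omega> p} i p}" for p
  proof -
    obtain N where N: "\<forall>j\<ge>N. \<omega> \<notin> bad_event j p" using eventually_gone by blast
    have "i \<le> N" if aff: "affected \<alpha> \<beta> {p. \<omega> p} i p" for i
    proof -
      obtain X x where i: "1 \<le> i" and X: "island (\<alpha> i) (\<beta> i) (clean \<alpha> \<beta> {p. \<omega> p} (i - 1)) X"
        and x: "x \<in> X" "linf p x \<le> \<beta> i"
        using aff unfolding affected_def by blast
      have "x \<in> clean \<alpha> \<beta> {p. \<omega> p} (i - 1)" using X x(1) unfolding island_def by blast
      moreover have "linf p x \<le> \<beta> (Suc (i - 1))" using x(2) i by simp
      ultimately have "\<omega> \<in> bad_event (i - 1) p" by (rule survivor_bad_event)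
      then have "\<not> N \<le> i - 1" using N by blast
      then show "i \<le> N" by linarith
    qed
    then have "{i. affected \<alpha> \<beta> {p. \<omega> p} i p} \<subseteq> {..N}" by blast
    then show ?thesis using finite_subset by blast
  qed
  ultimately show ?thesis unfolding sparse_def by blast
qed

lemma measure_bad_event:
  assumes C: "\<And>k. real (witness_count link_radius k) \<le> C ^ (2 ^ k)"
    and e: "0 \<le> e" "e \<le> 1"
  shows "measure (bernoulli_field e) (bad_event j p) \<le> (C ^ 2 * e) ^ (2 ^ j)"
proof -
  have "card (bad_family j p) \<le> (\<Sum>z\<in>sqbox p (\<beta> (Suc j)). card (witness_sets link_radius j z))"
    unfolding bad_family_def using finite_sqbox by (rule card_UN_le)
  also have "\<dots> \<le> (\<Sum>z\<in>sqbox p (\<beta> (Suc j)). witness_count link_radius j)"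
    using card_witness_sets by (intro sum_mono) blast
  also have "\<dots> = card (sqbox p (\<beta> (Suc j))) * witness_count link_radius j" by simp
  also have "\<dots> \<le> box_size link_radius (Suc j) * (witness_count link_radius j * witness_count link_radius j)"
  proof (rule mult_mono)
    show "card (sqbox p (\<beta> (Suc j))) \<le> box_size link_radius (Suc j)"
      unfolding card_sqbox box_size_def using link_radius_bounds(2)[of "Suc j"]
      by (intro power_mono nat_mono) auto
  qed (simp_all add: le_square)
  also have "\<dots> = witness_count link_radius (Suc j)" by (simp add: power2_eq_square)
  finally have "real (card (bad_family j p)) \<le> real (witness_count link_radius (Suc j))" by (rule of_nat_mono)
  also have "\<dots> \<le> C ^ (2 ^ Suc j)" by (rule C)
  finally have card: "real (card (bad_family j p)) \<le> C ^ (2 ^ Suc j)" .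
  have "measure (bernoulli_field e) (bad_event j p) \<le> real (card (bad_family j p)) * e ^ (2 ^ j)"
    unfolding bad_event_def using finite_bad_family bad_family_sizes e by (rule measure_union_occupied)
  also have "\<dots> \<le> C ^ (2 ^ Suc j) * e ^ (2 ^ j)"
    using card e by (intro mult_right_mono) auto
  also have "\<dots> = (C ^ 2 * e) ^ (2 ^ j)" by (simp add: power_mult power_mult_distrib)
  finally show ?thesis .
qed

end

theorem lemma1:
  fixes \<alpha> \<beta> :: "nat \<Rightarrow> int"
  assumes growth: "\<And>n. n \<ge> 1 \<Longrightarrow> 8 * (\<Sum>k\<in>{1..<n}. \<beta> k) < \<alpha> n \<and> \<alpha> n \<le> \<beta> n"
    and summ: "summable (\<lambda>i. ln (real_of_int (\<beta> (Suc i))) / 2 ^ (Suc i))"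
  shows "\<exists>\<epsilon>0>0. \<forall>\<epsilon>. 0 < \<epsilon> \<and> \<epsilon> < \<epsilon>0 \<longrightarrow>
           (AE \<omega> in bernoulli_field \<epsilon>. sparse \<alpha> \<beta> {p. \<omega> p})"
proof -
  interpret growth_sequences \<alpha> \<beta> using growth by unfold_locales
  obtain C :: real where C: "C \<ge> 1" "\<And>k. real (witness_count link_radius k) \<le> C ^ (2 ^ k)"
    using witness_count_double_exp[of link_radius, OF link_radius_bounds(5)
        summable_ln_box_size[OF summ]] by blast
  have AE_sparse: "AE \<omega> in bernoulli_field e. sparse \<alpha> \<beta> {p. \<omega> p}"
    if e: "0 < e" "e < 1 / (2 * C ^ 2)" for e
  proof -
    interpret prob_space "bernoulli_field e" by (rule prob_space_bernoulli_field)
    have C2: "1 \<le> C ^ 2" using C(1) by simp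
    then have "e * (2 * C ^ 2) < 1" using e(2) C(1) by (subst (asm) less_divide_eq) auto
    moreover have "e \<le> C ^ 2 * e" using mult_right_mono[of 1 "C ^ 2" e] C2 e(1) by simp
    ultimately have Ce: "C ^ 2 * e \<le> 1 / 2" "e \<le> 1" by (auto simp: algebra_simps)
    have bound: "measure (bernoulli_field e) (bad_event j p) \<le> (1 / 2) ^ j" for j p
    proof -
      have "measure (bernoulli_field e) (bad_event j p) \<le> (C ^ 2 * e) ^ (2 ^ j)"
        using measure_bad_event[OF C(2)] e Ce by simp
      also have "\<dots> \<le> (1 / 2) ^ (2 ^ j)" using Ce e by (intro power_mono) auto
      also have "\<dots> \<le> (1 / 2) ^ j" by (intro power_decreasing less_imp_le[OF less_exp]) auto
      finally show ?thesis .
    qed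
    have "summable (\<lambda>j. measure (bernoulli_field e) (bad_event j p))" for p
      by (rule summable_comparison_test'[where N = 0 and g = "\<lambda>j. (1 / 2) ^ j"]) (auto simp: bound)
    with bad_event_sets
    have "AE \<omega> in bernoulli_field e. \<forall>p. eventually (\<lambda>j. \<omega> \<notin> bad_event j p) sequentially"
      by (rule AE_eventually_not_in)
    moreover have "AE \<omega> in bernoulli_field e.
        (\<forall>p. eventually (\<lambda>j. \<omega> \<notin> bad_event j p) sequentially) \<longrightarrow> sparse \<alpha> \<beta> {p. \<omega> p}"
      by (intro AE_I2 impI sparse_if_finitely_many_bad) blast
    ultimately show ?thesis by (rule AE_mp)
  qed
  have "0 < 1 / (2 * C ^ 2)" using C(1) by simp
  with AE_sparse show ?thesis by blast
qed

end
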